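(* Assume $n\ge3$. Then every zero of $F$ that lies strictly between two zeros of $g$ (i.e. between two singularities of $F$) is not acceptable.
   Context: Data: an integer $N\ge 2$, reals $x_A<x_B$, $R=x_B-x_A$, and bins $i=1,\dots,N$ with widths $\Delta x_i>0$ and centers $x_i$ that tile $[x_A,x_B]$ contiguously in increasing order, so that $x_1-x_A=\Delta x_1/2$, $x_N-x_A=R-\Delta x_N/2$ and $0<x_1-x_A<\dots<x_N-x_A<R$. The counts are $y_i\in\{0,1,2,\dots\}$, $M=\sum_i y_i$, and $n$ is the number of indices with $y_i\ge1$. Write $d_i=x_i-x_A$. Define $$g(a)=\sum_{i=1}^N y_i\frac{d_i}{1+a d_i}$$ for $a\notin\{-1/d_i: y_i\ge 1\}$; these excluded points are the poles of $g$. Define $$F(a)=1+\frac R2\Big(a-\frac{M}{g(a)}\Big)$$ wherever $g(a)$ is finite and nonzero. At poles of $g$, $F(a)=1+aR/2$ by continuity. Let $\lambda(a)=M/(R(1+aR/2))$ for $a\neq-2/R$. A zero $a^*$ of $F$ is called acceptable if $a^*\ne-2/R$ and $\lambda(a^* )(1+a^*d_i)\ge0$ for all $i$, i.e. the linear model $f(x)=\lambda(1+a(x-x_A))$ with $(a,\lambda)=(a^*,\lambda(a^* ))$ has non-negative Poisson means $\mu_i=f(x_i)\Delta x_i$ in every bin. *)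

theory Defs
  imports Complex_Main
begin

text \<open>Bins are indexed by i = 1..N; bin i has centre x i and width dx i.
  The bins tile [xA, xB] contiguously in increasing order: bin i is the
  interval [x i - dx i / 2, x i + dx i / 2].\<close>

definition bins_tile :: "nat \<Rightarrow> real \<Rightarrow> real \<Rightarrow> (nat \<Rightarrow> real) \<Rightarrow> (nat \<Rightarrow> real) \<Rightarrow> bool" where
  "bins_tile N xA xB x dx \<longleftrightarrow>
     (\<forall>i\<in>{1..N}. dx i > 0) \<and>
     x 1 - dx 1 / 2 = xA \<and>
     x N + dx N / 2 = xB \<and>
     (\<forall>i. 1 \<le> i \<and> i < N \<longrightarrow> x i + dx i / 2 = x (Suc i) - dx (Suc i) / 2)"

definition dd :: "real \<Rightarrow> (nat \<Rightarrow> real) \<Rightarrow> nat \<Rightarrow> real" where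
  "dd xA x i = x i - xA"

definition totM :: "nat \<Rightarrow> (nat \<Rightarrow> nat) \<Rightarrow> real" where
  "totM N y = (\<Sum>i=1..N. real (y i))"

definition nonempty_bins :: "nat \<Rightarrow> (nat \<Rightarrow> nat) \<Rightarrow> nat" where
  "nonempty_bins N y = card {i\<in>{1..N}. y i \<ge> 1}"

definition is_pole :: "nat \<Rightarrow> real \<Rightarrow> (nat \<Rightarrow> real) \<Rightarrow> (nat \<Rightarrow> nat) \<Rightarrow> real \<Rightarrow> bool" where
  "is_pole N xA x y a \<longleftrightarrow> (\<exists>i\<in>{1..N}. y i \<ge> 1 \<and> a = - 1 / dd xA x i)"

definition gfun :: "nat \<Rightarrow> real \<Rightarrow> (nat \<Rightarrow> real) \<Rightarrow> (nat \<Rightarrow> nat) \<Rightarrow> real \<Rightarrow> real" where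
  "gfun N xA x y a = (\<Sum>i=1..N. real (y i) * dd xA x i / (1 + a * dd xA x i))"

definition g_zero :: "nat \<Rightarrow> real \<Rightarrow> (nat \<Rightarrow> real) \<Rightarrow> (nat \<Rightarrow> nat) \<Rightarrow> real \<Rightarrow> bool" where
  "g_zero N xA x y a \<longleftrightarrow> \<not> is_pole N xA x y a \<and> gfun N xA x y a = 0"

text \<open>F is defined at poles of g (by continuity) and where g is finite and nonzero.\<close>
definition F_defined :: "nat \<Rightarrow> real \<Rightarrow> (nat \<Rightarrow> real) \<Rightarrow> (nat \<Rightarrow> nat) \<Rightarrow> real \<Rightarrow> bool" where
  "F_defined N xA x y a \<longleftrightarrow> is_pole N xA x y a \<or> gfun N xA x y a \<noteq> 0"

definition Ffun :: "nat \<Rightarrow> real \<Rightarrow> real \<Rightarrow> (nat \<Rightarrow> real) \<Rightarrow> (nat \<Rightarrow> nat) \<Rightarrow> real \<Rightarrow> real" where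
  "Ffun N xA xB x y a =
     (if is_pole N xA x y a then 1 + a * (xB - xA) / 2
      else 1 + (xB - xA) / 2 * (a - totM N y / gfun N xA x y a))"

definition F_zero :: "nat \<Rightarrow> real \<Rightarrow> real \<Rightarrow> (nat \<Rightarrow> real) \<Rightarrow> (nat \<Rightarrow> nat) \<Rightarrow> real \<Rightarrow> bool" where
  "F_zero N xA xB x y a \<longleftrightarrow> F_defined N xA x y a \<and> Ffun N xA xB x y a = 0"

definition lam :: "nat \<Rightarrow> real \<Rightarrow> real \<Rightarrow> (nat \<Rightarrow> nat) \<Rightarrow> real \<Rightarrow> real" where
  "lam N xA xB y a = totM N y / ((xB - xA) * (1 + a * (xB - xA) / 2))"

definition acceptable :: "nat \<Rightarrow> real \<Rightarrow> real \<Rightarrow> (nat \<Rightarrow> real) \<Rightarrow> (nat \<Rightarrow> nat) \<Rightarrow> real \<Rightarrow> bool" where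
  "acceptable N xA xB x y a \<longleftrightarrow>
     a \<noteq> - 2 / (xB - xA) \<and>
     (\<forall>i\<in>{1..N}. lam N xA xB y a * (1 + a * dd xA x i) \<ge> 0)"

end

theory Submission
  imports Defs
begin

text \<open>Every zero z of g satisfies 1 + z d_1 > 0 > 1 + z d_N: otherwise all denominators
  1 + z d_i would share one sign (the d_i are positive and increasing), and g z, a sum of
  terms of that sign with at least one nonzero term, could not vanish. A zero a of F lying
  between two zeros of g therefore inherits 1 + a d_1 > 0 > 1 + a d_N, so the model mean
  changes sign across the bins unless \<lambda>(a) = 0, which is impossible since M > 0.\<close>

lemma bins_tile_centre_less_Suc:
  assumes "bins_tile N xA xB x dx" "1 \<le> i" "i < N"
  shows "x i < x (Suc i)"
proof -
  have "dx i > 0" "dx (Suc i) > 0" "x i + dx i / 2 = x (Suc i) - dx (Suc i) / 2"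
    using assms unfolding bins_tile_def by auto
  then show ?thesis by linarith
qed

lemma bins_tile_centre_mono:
  assumes "bins_tile N xA xB x dx" "1 \<le> i" "i \<le> j" "j \<le> N"
  shows "x i \<le> x j"
  using assms(3,4)
proof (induction j rule: dec_induct)
  case base
  then show ?case by simp
next
  case (step k)
  then have "x i \<le> x k" by simp
  also have "x k < x (Suc k)" using bins_tile_centre_less_Suc[OF assms(1)] step assms(2) by simp
  finally show ?case by simp
qed

lemma bins_tile_dd_bounds:
  assumes "bins_tile N xA xB x dx" "i \<in> {1..N}"
  shows "0 < dd xA x 1" "dd xA x 1 \<le> dd xA x i" "dd xA x i \<le> dd xA x N"
proof -
  have "dx 1 > 0" "x 1 - dx 1 / 2 = xA"
    using assms unfolding bins_tile_def by auto
  then show "0 < dd xA x 1" by (simp add: dd_def)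
  show "dd xA x 1 \<le> dd xA x i"
    using bins_tile_centre_mono[OF assms(1), of 1 i] assms(2) by (simp add: dd_def)
  show "dd xA x i \<le> dd xA x N"
    using bins_tile_centre_mono[OF assms(1), of i N] assms(2) by (simp add: dd_def)
qed

lemma totM_pos:
  assumes "k \<in> {1..N}" "y k \<ge> 1"
  shows "totM N y > 0"
  unfolding totM_def using assms by (intro sum_pos2[of _ k]) auto

lemma g_zero_denominator_nonzero:
  assumes "g_zero N xA x y z" "i \<in> {1..N}" "y i \<ge> 1"
  shows "1 + z * dd xA x i \<noteq> 0"
proof
  assume root: "1 + z * dd xA x i = 0"
  then have "dd xA x i \<noteq> 0" by auto
  with root have "z = - 1 / dd xA x i" by (simp add: field_simps)
  then have "is_pole N xA x y z" unfolding is_pole_def using assms(2,3) by blast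
  with assms(1) show False unfolding g_zero_def by simp
qed

lemma gfun_neg:
  assumes "\<And>i. i \<in> {1..N} \<Longrightarrow> dd xA x i > 0"
    and "\<And>i. i \<in> {1..N} \<Longrightarrow> 1 + z * dd xA x i \<le> 0"
    and "k \<in> {1..N}" "y k \<ge> 1" "1 + z * dd xA x k \<noteq> 0"
  shows "gfun N xA x y z < 0"
proof -
  have "1 + z * dd xA x k < 0" using assms(2)[OF assms(3)] assms(5) by linarith
  then have "0 < - (real (y k) * dd xA x k / (1 + z * dd xA x k))"
    using assms(1)[OF assms(3)] assms(4) by (simp add: divide_pos_neg)
  moreover have "0 \<le> - (real (y i) * dd xA x i / (1 + z * dd xA x i))" if "i \<in> {1..N}" for i
    using assms(1,2)[OF that] by (simp add: divide_nonneg_nonpos)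
  ultimately have "0 < (\<Sum>i=1..N. - (real (y i) * dd xA x i / (1 + z * dd xA x i)))"
    using assms(3) by (intro sum_pos2[of _ k]) auto
  then show ?thesis unfolding gfun_def by (simp add: sum_negf)
qed

lemma gfun_pos:
  assumes "\<And>i. i \<in> {1..N} \<Longrightarrow> dd xA x i > 0"
    and "\<And>i. i \<in> {1..N} \<Longrightarrow> 1 + z * dd xA x i \<ge> 0"
    and "k \<in> {1..N}" "y k \<ge> 1" "1 + z * dd xA x k \<noteq> 0"
  shows "gfun N xA x y z > 0"
proof -
  have "1 + z * dd xA x k > 0" using assms(2)[OF assms(3)] assms(5) by linarith
  then have "0 < real (y k) * dd xA x k / (1 + z * dd xA x k)"
    using assms(1)[OF assms(3)] assms(4) by simp
  moreover have "0 \<le> real (y i) * dd xA x i / (1 + z * dd xA x i)" if "i \<in> {1..N}" for i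
    using assms(1,2)[OF that] by simp
  ultimately show ?thesis
    unfolding gfun_def using assms(3) by (intro sum_pos2[of _ k]) auto
qed

lemma g_zero_first_denominator_pos:
  assumes "bins_tile N xA xB x dx" "k \<in> {1..N}" "y k \<ge> 1" "g_zero N xA x y z"
  shows "1 + z * dd xA x 1 > 0"
proof (rule ccontr)
  assume first: "\<not> 1 + z * dd xA x 1 > 0"
  note d = bins_tile_dd_bounds[OF assms(1)]
  have "z \<le> 0" using first d(1)[OF assms(2)] by (smt (verit) mult_pos_pos)
  then have "1 + z * dd xA x i \<le> 0" if "i \<in> {1..N}" for i
    using first mult_left_mono_neg[OF d(2)[OF that] \<open>z \<le> 0\<close>] by simp
  then have "gfun N xA x y z < 0"
    using d assms(2,3) g_zero_denominator_nonzero[OF assms(4,2,3)]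
    by (intro gfun_neg) force+
  with assms(4) show False unfolding g_zero_def by simp
qed

lemma g_zero_last_denominator_neg:
  assumes "bins_tile N xA xB x dx" "k \<in> {1..N}" "y k \<ge> 1" "g_zero N xA x y z"
  shows "1 + z * dd xA x N < 0"
proof (rule ccontr)
  assume last: "\<not> 1 + z * dd xA x N < 0"
  note d = bins_tile_dd_bounds[OF assms(1)]
  have "1 + z * dd xA x i \<ge> 0" if "i \<in> {1..N}" for i
  proof (cases "z \<ge> 0")
    case True
    then show ?thesis using d(1,2)[OF that] by simp
  next
    case False
    then have "z * dd xA x N \<le> z * dd xA x i" using d(3)[OF that] by (simp add: mult_left_mono_neg)
    then show ?thesis using last by simp
  qed
  then have "gfun N xA x y z > 0"
    using d assms(2,3) g_zero_denominator_nonzero[OF assms(4,2,3)]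
    by (intro gfun_pos) force+
  with assms(4) show False unfolding g_zero_def by simp
qed

lemma not_acceptable_if_sign_change:
  assumes "xA < xB" "k \<in> {1..N}" "y k \<ge> 1"
    and "1 + a * dd xA x 1 > 0" "1 + a * dd xA x N < 0"
  shows "\<not> acceptable N xA xB x y a"
proof
  assume acc: "acceptable N xA xB x y a"
  have "1 + a * (xB - xA) / 2 \<noteq> 0"
    using acc assms(1) unfolding acceptable_def by (auto simp: field_simps)
  then have "lam N xA xB y a \<noteq> 0"
    using totM_pos[of k N y] assms(1-3) unfolding lam_def by simp
  moreover have "lam N xA xB y a * (1 + a * dd xA x 1) \<ge> 0"
    and "lam N xA xB y a * (1 + a * dd xA x N) \<ge> 0"
    using acc assms(2) unfolding acceptable_def by auto
  ultimately show False
    using assms(4,5) by (smt (verit) mult_neg_pos mult_pos_neg zero_less_mult_iff)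
qed

theorem mainTheorem8:
  fixes N :: nat and xA xB :: real and x dx :: "nat \<Rightarrow> real" and y :: "nat \<Rightarrow> nat"
    and a z1 z2 :: real
  assumes "N \<ge> 2" and "xA < xB"
    and "bins_tile N xA xB x dx"
    and "nonempty_bins N y \<ge> 3"
    and "F_zero N xA xB x y a"
    and "g_zero N xA x y z1" and "g_zero N xA x y z2"
    and "z1 < a" and "a < z2"
  shows "\<not> acceptable N xA xB x y a"
proof -
  obtain k where k: "k \<in> {1..N}" "y k \<ge> 1"
    using assms(4) unfolding nonempty_bins_def by (metis (no_types, lifting) card.empty
        empty_Collect_eq not_numeral_le_zero)
  have N: "1 \<in> {1..N}" "N \<in> {1..N}" using assms(1) by auto
  note d = bins_tile_dd_bounds[OF assms(3)]
  have "1 + a * dd xA x 1 > 0"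
    using g_zero_first_denominator_pos[OF assms(3) k assms(6)] assms(8) d(1)[OF N(1)]
    by (smt (verit) mult_strict_right_mono)
  moreover have "1 + a * dd xA x N < 0"
    using g_zero_last_denominator_neg[OF assms(3) k assms(7)] assms(9) d(1,2)[OF N(2)]
    by (smt (verit) mult_strict_right_mono)
  ultimately show ?thesis
    by (rule not_acceptable_if_sign_change[OF assms(2) k(1), of y, OF k(2)])
qed

end
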